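(* Let $\mathbb{F}$ be a field, let $n \geq 3$, and let $a,b,c \in \{-1,1\}$ (elements of $\mathbb{F}$). Let $A=(A_{i,j})$ be the $n\times n$ matrix over $\mathbb{F}$ whose entries are: $A_{1,2} = -c$ and $A_{2,1} = c$; $A_{n-1,n} = b$ and $A_{n,n-1} = a$; $A_{i,i+2} = -1$ and $A_{i+2,i} = 1$ for all $1 \leq i \leq n-2$; and all other entries equal to $0$. (For example, for $n=3$ and $n=4$ this gives $A=\begin{pmatrix} 0 & -c & -1 \\ c & 0 & b \\ 1 & a & 0\end{pmatrix}$ and $A=\begin{pmatrix} 0 & -c & -1 & 0 \\ c & 0 & 0 & -1 \\ 1 & 0 & 0 & b \\ 0 & 1 & a & 0\end{pmatrix}$, respectively.) If the rank of $A$ is even, then $a = -b$ (i.e., $A$ is skew-symmetric).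
   Context: An $n\times n$ matrix $A$ over a field is skew-symmetric if $A^T = -A$ and every diagonal entry of $A$ is zero. *)

theory Defs
  imports "Jordan_Normal_Form.DL_Rank"
begin

text \<open>The n x n matrix A of the statement. Jordan_Normal_Form matrices are
  0-indexed; we write i' = i+1, j' = j+1 for the 1-based indices of the paper.\<close>
definition A_mat :: "nat \<Rightarrow> 'a \<Rightarrow> 'a \<Rightarrow> 'a \<Rightarrow> 'a::field mat" where
  "A_mat n a b c = mat n n (\<lambda>(i, j).
     (let i' = i + 1; j' = j + 1 in
      if i' = 1 \<and> j' = 2 then - c
      else if i' = 2 \<and> j' = 1 then c
      else if i' = n - 1 \<and> j' = n then b
      else if i' = n \<and> j' = n - 1 then a
      else if j' = i' + 2 then - 1
      else if i' = j' + 2 then 1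
      else 0))"

end

theory Submission
  imports Defs
begin

text \<open>Write n = m + 3 (indices from 0). The first m + 1 rows of A v = 0 say
  v_2 = -c v_1, v_3 = c v_0 and v_(i+2) = v_(i-2), so a kernel vector is the 4-periodic
  continuation of (v_0, v_1, -c v_1, c v_0); the last two rows then form a 2x2 linear system
  in (v_0, v_1) whose shape depends on m mod 4. If a \<noteq> -b, then a = b and 2 \<noteq> 0.
  For n odd the system has determinant \<plusminus>c(a + b) \<noteq> 0, so A is regular and its rank n is odd.
  For n even the system is singular, so det A = 0, but adding the rank-one matrix with ones in
  the last two rows and first two columns makes it regular; by subadditivity of rank, A has the
  odd rank n - 1.\<close>

lemma A_mat_carrier: "A_mat n a b c \<in> carrier_mat n n"
  by (simp add: A_mat_def)

lemma A_mat_index: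
  assumes "i < m + 3" and "j < m + 3"
  shows "A_mat (m + 3) a b c $$ (i, j) =
      (if j = 1 \<and> i = 0 then - c else 0) + (if j = 0 \<and> i = 1 then c else 0)
    + (if j = m + 2 \<and> i = m + 1 then b else 0) + (if j = m + 1 \<and> i = m + 2 then a else 0)
    + (if j = i + 2 then - 1 else 0) + (if i = j + 2 then 1 else 0)"
  using assms unfolding A_mat_def by (simp add: Let_def)

lemma A_mat_mult_vec_nth:
  fixes v :: "'a::field vec"
  assumes "dim_vec v = m + 3" and "i < m + 3"
  shows "(A_mat (m + 3) a b c *\<^sub>v v) $ i =
      (if i = 0 then - c * v $ 1 else 0) + (if i = 1 then c * v $ 0 else 0)
    + (if i = m + 1 then b * v $ (m + 2) else 0) + (if i = m + 2 then a * v $ (m + 1) else 0)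
    + (if i + 2 < m + 3 then - v $ (i + 2) else 0) + (if 2 \<le> i then v $ (i - 2) else 0)"
proof -
  let ?d = "\<lambda>k x j. if j = k then x * v $ j else 0"
  have "(A_mat (m + 3) a b c *\<^sub>v v) $ i = (\<Sum>j<m + 3. A_mat (m + 3) a b c $$ (i, j) * v $ j)"
    using assms by (simp add: A_mat_def scalar_prod_def atLeast0LessThan)
  also have "\<dots> = (\<Sum>j<m + 3. ?d 1 (if i = 0 then - c else 0) j + ?d 0 (if i = 1 then c else 0) j
    + ?d (m + 2) (if i = m + 1 then b else 0) j + ?d (m + 1) (if i = m + 2 then a else 0) j
    + ?d (i + 2) (- 1) j + ?d (i - 2) (if 2 \<le> i then 1 else 0) j)"
  proof (rule sum.cong)
    fix j assume "j \<in> {..<m + 3}"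
    then have "j < m + 3" by simp
    then show "A_mat (m + 3) a b c $$ (i, j) * v $ j = ?d 1 (if i = 0 then - c else 0) j
      + ?d 0 (if i = 1 then c else 0) j + ?d (m + 2) (if i = m + 1 then b else 0) j
      + ?d (m + 1) (if i = m + 2 then a else 0) j + ?d (i + 2) (- 1) j
      + ?d (i - 2) (if 2 \<le> i then 1 else 0) j"
      unfolding A_mat_index[OF assms(2) \<open>j < m + 3\<close>] distrib_right
      by (intro arg_cong2[where f = "(+)"]) auto
  qed simp
  also have "\<dots> = (if i = 0 then - c * v $ 1 else 0) + (if i = 1 then c * v $ 0 else 0)
    + (if i = m + 1 then b * v $ (m + 2) else 0) + (if i = m + 2 then a * v $ (m + 1) else 0)
    + (if i + 2 < m + 3 then - v $ (i + 2) else 0) + (if 2 \<le> i then v $ (i - 2) else 0)"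
    using assms(2) by (simp only: sum.distrib sum.delta finite_lessThan lessThan_iff) auto
  finally show ?thesis .
qed

lemma det_ne_0_if_kernel_trivial:
  fixes M :: "'a::field mat"
  assumes "M \<in> carrier_mat n n"
    and "\<And>v. v \<in> carrier_vec n \<Longrightarrow> M *\<^sub>v v = 0\<^sub>v n \<Longrightarrow> v = 0\<^sub>v n"
  shows "det M \<noteq> 0"
  using det_0_iff_vec_prod_zero_field[OF assms(1)] assms(2) by blast

lemma linear_system_2_trivial:
  fixes p q r s x y :: "'a::field"
  assumes "p * x + q * y = 0" and "r * x + s * y = 0" and "p * s - q * r \<noteq> 0"
  shows "x = 0 \<and> y = 0"
proof -
  have "(p * s - q * r) * x = s * (p * x + q * y) - q * (r * x + s * y)"
    and "(p * s - q * r) * y = p * (r * x + s * y) - r * (p * x + q * y)"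
    by (simp_all add: algebra_simps)
  then show ?thesis
    using assms by simp
qed

definition head_seq :: "'a::field \<Rightarrow> 'a \<Rightarrow> 'a \<Rightarrow> nat \<Rightarrow> 'a" where
  "head_seq c x y k = [x, y, - c * y, c * x] ! (k mod 4)"

lemma head_seq_add: "head_seq c x y (m + k) = [x, y, - c * y, c * x] ! ((m mod 4 + k) mod 4)"
  by (simp add: head_seq_def mod_add_left_eq)

lemma head_seq_add_4: "head_seq c x y (k + 4) = head_seq c x y k"
  by (simp add: head_seq_def)

lemma head_seq_zero: "head_seq c 0 0 k = 0"
proof -
  have "[0, 0, - c * 0, c * 0] = replicate 4 (0::'a)" by (simp add: numeral_eq_Suc)
  then show ?thesis by (simp add: head_seq_def)
qed

lemma A_mat_head_rows_eq_0D:
  fixes v :: "'a::field vec"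
  assumes v: "dim_vec v = m + 3"
    and rows: "\<And>i. i \<le> m \<Longrightarrow> (A_mat (m + 3) a b c *\<^sub>v v) $ i = 0"
  shows "v = vec (m + 3) (head_seq c (v $ 0) (v $ 1))"
proof -
  have entries: "v $ k = head_seq c (v $ 0) (v $ 1) k" if "k < m + 3" for k
    using that
  proof (induction k rule: less_induct)
    case (less k)
    consider "k < 2" | "k = 2" | "k = 3" | "4 \<le> k"
      by linarith
    then show ?case
    proof cases
      case 1
      then show ?thesis
        by (auto simp: head_seq_def less_2_cases_iff)
    next
      case 2
      then show ?thesis
        using rows[of 0] A_mat_mult_vec_nth[OF v, of 0]
        by (simp add: head_seq_def del: add_2_eq_Suc')
    next
      case 3
      then show ?thesis
        using less.prems rows[of 1] A_mat_mult_vec_nth[OF v, of 1]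
        by (simp add: head_seq_def del: add_2_eq_Suc')
    next
      case 4
      then obtain j where k: "k = 4 + j"
        using le_Suc_ex by blast
      then have "v $ k = v $ j"
        using less.prems rows[of "j + 2"] A_mat_mult_vec_nth[OF v, of "j + 2"]
        by (simp del: add_2_eq_Suc')
      then show ?thesis
        using less.IH[of j] less.prems k by (simp add: head_seq_def)
    qed
  qed
  show ?thesis
  proof (rule eq_vecI)
    fix k assume "k < dim_vec (vec (m + 3) (head_seq c (v $ 0) (v $ 1)))"
    then show "v $ k = vec (m + 3) (head_seq c (v $ 0) (v $ 1)) $ k"
      using entries[of k] by simp
  qed (simp add: v)
qed

text \<open>Row m + 1 involves v_(m-1); it is written as the periodic term of index m + 3 so that
  the case m = 0, where it is c v_0 from the second row, is covered as well.\<close>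

lemma A_mat_mult_head_seq:
  "A_mat (m + 3) a b c *\<^sub>v vec (m + 3) (head_seq c x y) =
   vec (m + 3) (\<lambda>i. if i = m + 1 then b * head_seq c x y (m + 2) + head_seq c x y (m + 3)
     else if i = m + 2 then a * head_seq c x y (m + 1) + head_seq c x y m else 0)"
    (is "_ = vec _ ?r")
proof (rule eq_vecI)
  fix i assume "i < dim_vec (vec (m + 3) ?r)"
  then have i: "i < m + 3" by simp
  let ?v = "vec (m + 3) (head_seq c x y)"
  note row = A_mat_mult_vec_nth[of ?v m i a b c, simplified, OF i]
  consider "i < 2" | "2 \<le> i" "i \<le> m" | "i = m + 1" "0 < m" | "i = m + 2"
    using i by linarith
  then show "(A_mat (m + 3) a b c *\<^sub>v ?v) $ i = vec (m + 3) ?r $ i"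
  proof cases
    case 1
    then show ?thesis
      using row by (auto simp: head_seq_def less_2_cases_iff)
  next
    case 2
    then have "head_seq c x y (i + 2) = head_seq c x y (i - 2)"
      using head_seq_add_4[of c x y "i - 2"] by simp
    then show ?thesis
      using 2 i row by simp
  next
    case 3
    then have "head_seq c x y (m - 1) = head_seq c x y (m + 3)"
      using head_seq_add_4[of c x y "m - 1"] by (simp add: add.commute)
    then show ?thesis
      using 3 row by simp
  next
    case 4
    then show ?thesis
      using row by simp
  qed
qed (simp add: A_mat_def)

lemma boundary_system_odd_dim_trivial:
  fixes a b c x y :: "'a::field"
  assumes "even m" and "c \<noteq> 0" and "a + b \<noteq> 0"
    and "b * head_seq c x y (m + 2) + head_seq c x y (m + 3) = 0"
    and "a * head_seq c x y (m + 1) + head_seq c x y m = 0"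
  shows "x = 0 \<and> y = 0"
proof -
  have "m mod 4 = 0 \<or> m mod 4 = 2"
    using \<open>even m\<close> by presburger
  then show ?thesis
  proof (elim disjE)
    assume "m mod 4 = 0"
    with assms(4,5)[unfolded head_seq_add] have "c * x + - (b * c) * y = 0" "1 * x + a * y = 0"
      by (simp_all add: head_seq_def algebra_simps)
    moreover have "c * a - - (b * c) * 1 = c * (a + b)"
      by (simp add: algebra_simps)
    ultimately show ?thesis
      using assms(2,3) by (metis linear_system_2_trivial mult_eq_0_iff)
  next
    assume "m mod 4 = 2"
    with assms(4,5)[unfolded head_seq_add] have "b * x + 1 * y = 0" "(a * c) * x + - c * y = 0"
      by (simp_all add: head_seq_def algebra_simps)
    moreover have "b * - c - 1 * (a * c) = - (c * (a + b))"
      by (simp add: algebra_simps)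
    ultimately show ?thesis
      using assms(2,3) by (metis linear_system_2_trivial mult_eq_0_iff neg_equal_0_iff_equal)
  qed
qed

lemma det_A_mat_ne_0_odd_dim:
  fixes a b c :: "'a::field"
  assumes "even m" and "c \<noteq> 0" and "a + b \<noteq> 0"
  shows "det (A_mat (m + 3) a b c) \<noteq> 0"
proof (rule det_ne_0_if_kernel_trivial[OF A_mat_carrier])
  fix v assume v: "v \<in> carrier_vec (m + 3)" and ker: "A_mat (m + 3) a b c *\<^sub>v v = 0\<^sub>v (m + 3)"
  define x y where "x = v $ 0" and "y = v $ 1"
  have v_eq: "v = vec (m + 3) (head_seq c x y)"
    unfolding x_def y_def by (rule A_mat_head_rows_eq_0D[of _ _ a b]) (use v ker in auto)
  have "b * head_seq c x y (m + 2) + head_seq c x y (m + 3) = 0"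
    and "a * head_seq c x y (m + 1) + head_seq c x y m = 0"
    using arg_cong[OF ker, of "\<lambda>w. w $ (m + 1)"] arg_cong[OF ker, of "\<lambda>w. w $ (m + 2)"]
    unfolding v_eq A_mat_mult_head_seq by simp_all
  then have "x = 0 \<and> y = 0"
    using boundary_system_odd_dim_trivial assms by blast
  then show "v = 0\<^sub>v (m + 3)"
    by (intro eq_vecI) (simp_all add: v_eq head_seq_zero)
qed

lemma det_A_mat_eq_0_even_dim:
  fixes a b c :: "'a::field"
  assumes "odd m" and "a = b" and "b = c \<or> b = - c" and "c * c = 1"
  shows "det (A_mat (m + 3) a b c) = 0"
proof -
  define x y :: 'a where "x = (if b = c then 0 else 1)" and "y = (if b = c then 1 else 0)"
  let ?w = "vec (m + 3) (head_seq c x y)"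
  have "m mod 4 = 1 \<or> m mod 4 = 3"
    using \<open>odd m\<close> by presburger
  then have "b * head_seq c x y (m + 2) + head_seq c x y (m + 3) = 0"
    "a * head_seq c x y (m + 1) + head_seq c x y m = 0"
    unfolding head_seq_add using assms(2-4) by (auto simp: head_seq_def x_def y_def)
  then have "A_mat (m + 3) a b c *\<^sub>v ?w = 0\<^sub>v (m + 3)"
    unfolding A_mat_mult_head_seq by (intro eq_vecI) auto
  moreover have "?w \<noteq> 0\<^sub>v (m + 3)"
  proof
    assume "?w = 0\<^sub>v (m + 3)"
    then have "?w $ 0 = 0" "?w $ 1 = 0"
      by simp_all
    then show False
      by (simp add: head_seq_def x_def y_def split: if_splits)
  qed
  ultimately show ?thesis
    using det_0_iff_vec_prod_zero_field[OF A_mat_carrier] by (meson vec_carrier)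
qed

definition corner_ones :: "nat \<Rightarrow> 'a::field mat" where
  "corner_ones m = mat (m + 3) (m + 3) (\<lambda>(i, j). if m < i \<and> j < 2 then 1 else 0)"

lemma corner_ones_carrier: "corner_ones m \<in> carrier_mat (m + 3) (m + 3)"
  by (simp add: corner_ones_def)

lemma corner_ones_mult_vec_nth:
  fixes v :: "'a::field vec"
  assumes "dim_vec v = m + 3" and "i < m + 3"
  shows "(corner_ones m *\<^sub>v v) $ i = (if m < i then v $ 0 + v $ 1 else 0)"
proof -
  have "(corner_ones m *\<^sub>v v) $ i = (\<Sum>j<m + 3. (if m < i \<and> j < 2 then 1 else 0) * v $ j)"
    using assms by (simp add: corner_ones_def scalar_prod_def atLeast0LessThan)
  also have "\<dots> = (if m < i then \<Sum>j<2. v $ j else 0)"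
    by (cases "m < i") (auto intro!: sum.mono_neutral_cong_right split: if_splits)
  finally show ?thesis
    by (simp add: numeral_2_eq_2)
qed

lemma rank_corner_ones_le_1: "vec_space.rank (m + 3) (corner_ones m :: 'a::field mat) \<le> 1"
  by (rule vec_space.rank_le_1_product_entries[OF corner_ones_carrier,
        where f = "\<lambda>i. if m < i then 1 else 0" and g = "\<lambda>j. if j < 2 then 1 else 0"])
    (simp add: corner_ones_def)

lemma boundary_system_even_dim_perturbed_trivial:
  fixes a b c x y :: "'a::field"
  assumes "odd m" and "a = b" and "b = c \<or> b = - c" and "c * c = 1" and "(2::'a) \<noteq> 0"
    and "b * head_seq c x y (m + 2) + head_seq c x y (m + 3) + (x + y) = 0"
    and "a * head_seq c x y (m + 1) + head_seq c x y m + (x + y) = 0"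
  shows "x = 0 \<and> y = 0"
proof -
  have "b * b = 1"
    using assms(3,4) by auto
  have "m mod 4 = 1 \<or> m mod 4 = 3"
    using \<open>odd m\<close> by presburger
  then show ?thesis
  proof (elim disjE)
    assume "m mod 4 = 1"
    with assms(6,7)[unfolded head_seq_add]
    have "(b * c + 2) * x + 1 * y = 0" "1 * x + (2 - a * c) * y = 0"
      by (simp_all add: head_seq_def algebra_simps)
    moreover have "(b * c + 2) * (2 - a * c) - 1 * 1 = 2"
    proof -
      have "(s + 2) * (2 - s) - 1 * 1 = 2" if "s * s = 1" for s :: 'a
        using that by (simp add: algebra_simps)
      moreover have "(b * c) * (b * c) = (b * b) * (c * c)"
        by (simp add: ac_simps)
      ultimately show ?thesis
        using \<open>b * b = 1\<close> \<open>c * c = 1\<close> unfolding \<open>a = b\<close> by simp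
    qed
    ultimately show ?thesis
      using \<open>2 \<noteq> 0\<close> by (metis linear_system_2_trivial)
  next
    assume "m mod 4 = 3"
    with assms(6,7)[unfolded head_seq_add]
    have "1 * x + (b - c + 1) * y = 0" "(a + c + 1) * x + 1 * y = 0"
      by (simp_all add: head_seq_def algebra_simps)
    moreover have "1 * 1 - (b - c + 1) * (a + c + 1) = - 2 * b + (c * c - b * b)"
      unfolding \<open>a = b\<close> by (simp add: algebra_simps)
    moreover have "- 2 * b + (c * c - b * b) \<noteq> 0"
      using \<open>2 \<noteq> 0\<close> \<open>b * b = 1\<close> \<open>c * c = 1\<close> by auto
    ultimately show ?thesis
      by (metis linear_system_2_trivial)
  qed
qed

lemma det_A_mat_plus_corner_ones_ne_0:
  fixes a b c :: "'a::field"
  assumes "odd m" and "a = b" and "b = c \<or> b = - c" and "c * c = 1" and "(2::'a) \<noteq> 0"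
  shows "det (A_mat (m + 3) a b c + corner_ones m) \<noteq> 0"
proof (rule det_ne_0_if_kernel_trivial[OF add_carrier_mat[OF corner_ones_carrier]])
  fix v assume v: "v \<in> carrier_vec (m + 3)"
    and ker: "(A_mat (m + 3) a b c + corner_ones m) *\<^sub>v v = 0\<^sub>v (m + 3)"
  have rows: "(A_mat (m + 3) a b c *\<^sub>v v) $ i + (if m < i then v $ 0 + v $ 1 else 0) = 0"
    if "i < m + 3" for i
  proof -
    have "(A_mat (m + 3) a b c *\<^sub>v v) $ i + (corner_ones m *\<^sub>v v) $ i = 0"
      using arg_cong[OF ker, of "\<lambda>w. w $ i"] that
      by (simp add: add_mult_distrib_mat_vec[OF A_mat_carrier corner_ones_carrier v]
          carrier_matD[OF corner_ones_carrier] del: index_mult_mat_vec)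
    then show ?thesis
      using that by (simp add: corner_ones_mult_vec_nth[OF carrier_vecD[OF v]])
  qed
  define x y where "x = v $ 0" and "y = v $ 1"
  have "(A_mat (m + 3) a b c *\<^sub>v v) $ i = 0" if "i \<le> m" for i
    using rows[of i] that by simp
  then have v_eq: "v = vec (m + 3) (head_seq c x y)"
    unfolding x_def y_def by (rule A_mat_head_rows_eq_0D[OF carrier_vecD[OF v]])
  have "b * head_seq c x y (m + 2) + head_seq c x y (m + 3) + (x + y) = 0"
    and "a * head_seq c x y (m + 1) + head_seq c x y m + (x + y) = 0"
    using rows[of "m + 1"] rows[of "m + 2"] unfolding v_eq A_mat_mult_head_seq
    by (simp_all add: head_seq_def)
  then have "x = 0 \<and> y = 0"
    using boundary_system_even_dim_perturbed_trivial assms by blast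
  then show "v = 0\<^sub>v (m + 3)"
    by (intro eq_vecI) (simp_all add: v_eq head_seq_zero)
qed

lemma rank_A_mat_odd_dim:
  fixes a b c :: "'a::field"
  assumes "odd n" and "3 \<le> n" and "c \<noteq> 0" and "a + b \<noteq> 0"
  shows "vec_space.rank n (A_mat n a b c) = n"
proof -
  obtain m where n: "n = m + 3"
    using assms(2) by (metis add.commute le_Suc_ex)
  with assms(1) have "det (A_mat n a b c) \<noteq> 0"
    using det_A_mat_ne_0_odd_dim[OF _ assms(3,4)] by simp
  then show ?thesis
    using vec_space.det_rank_iff[OF A_mat_carrier] by blast
qed

lemma rank_A_mat_even_dim:
  fixes a b c :: "'a::field"
  assumes "even n" and "3 \<le> n" and "a = b" and "b = c \<or> b = - c" and "c * c = 1"
    and "(2::'a) \<noteq> 0"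
  shows "vec_space.rank n (A_mat n a b c) = n - 1"
proof -
  obtain m where n: "n = m + 3"
    using assms(2) by (metis add.commute le_Suc_ex)
  with assms(1) have "odd m"
    by simp
  have "vec_space.rank n (A_mat n a b c) < n"
    using vec_space.det_zero_low_rank[OF A_mat_carrier]
      det_A_mat_eq_0_even_dim[OF \<open>odd m\<close> assms(3-5)] n
    by blast
  moreover have "n \<le> vec_space.rank n (A_mat n a b c) + 1"
  proof -
    have "n = vec_space.rank n (A_mat n a b c + corner_ones m)"
      using vec_space.det_rank_iff[OF add_carrier_mat[OF corner_ones_carrier]]
        det_A_mat_plus_corner_ones_ne_0[OF \<open>odd m\<close> assms(3-6)] n
      by metis
    also have "\<dots> \<le>
        vec_space.rank n (A_mat n a b c) + vec_space.rank n (corner_ones m :: 'a mat)"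
      using vec_space.rank_subadditive[OF A_mat_carrier corner_ones_carrier] n by simp
    also have "\<dots> \<le> vec_space.rank n (A_mat n a b c) + 1"
      using rank_corner_ones_le_1[of m] n by simp
    finally show ?thesis .
  qed
  ultimately show ?thesis
    by linarith
qed

theorem mainTheorem1:
  fixes n :: nat and a b c :: "'a::field"
  assumes "n \<ge> 3"
    and "a \<in> {-1, 1}" and "b \<in> {-1, 1}" and "c \<in> {-1, 1}"
    and "even (vec_space.rank n (A_mat n a b c))"
  shows "a = - b"
proof (rule ccontr)
  assume "a \<noteq> - b"
  then have "a + b \<noteq> 0"
    by (simp add: eq_neg_iff_add_eq_0)
  have "a = b"
    using \<open>a \<noteq> - b\<close> assms(2,3) by auto
  then have "(2::'a) \<noteq> 0"
    using \<open>a + b \<noteq> 0\<close> by (metis mult_2 mult_zero_left)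
  have "c \<noteq> 0" and "c * c = 1" and "b = c \<or> b = - c"
    using assms(3,4) by auto
  show False
  proof (cases "even n")
    case True
    then have "vec_space.rank n (A_mat n a b c) = n - 1"
      using rank_A_mat_even_dim assms(1) \<open>a = b\<close> \<open>b = c \<or> b = - c\<close>
        \<open>c * c = 1\<close> \<open>2 \<noteq> 0\<close> by blast
    with True assms(1,5) show False
      by simp
  next
    case False
    then have "vec_space.rank n (A_mat n a b c) = n"
      using rank_A_mat_odd_dim assms(1) \<open>c \<noteq> 0\<close> \<open>a + b \<noteq> 0\<close> by blast
    with False assms(5) show False
      by simp
  qed
qed

end
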